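(* Let $G=(V,E)$ be a graph, let $\mathcal{M}$ be a nontrivial, unbounded graph matroid family with dimensionality $d$, and let $k\ge2$ be an integer. If $\mathcal{M}(G)$ is vertically $k$-connected, then the minimum degree of $G$ is at least $k+d-1$. In particular, $|V|\ge k+d$.
   Context: All graphs are finite and simple and have no isolated vertices. A graph matroid family $\mathcal{M}$ assigns to every graph $G$ a matroid $\mathcal{M}(G)$ on $E(G)$ such that (i) every graph isomorphism $V(G)\to V(H)$ induces an isomorphism $\mathcal{M}(G)\to\mathcal{M}(H)$, and (ii) for every subgraph $H$ of $G$, $\mathcal{M}(H)$ is the restriction of $\mathcal{M}(G)$ to $E(H)$. $r(G)$ is the rank of $\mathcal{M}(G)$. $\mathcal{M}$ is nontrivial if some graph $G$ has $r(G)<|E(G)|$, unbounded if $r(K_n)$ is unbounded. An $\mathcal{M}$-circuit is a graph $C$ with $r(C)<|E(C)|$ and $r(C-e)=|E(C)|-1$ for all edges $e$; the dimensionality $d$ is the minimum over $\mathcal{M}$-circuits of (minimum degree $-1$). For a matroid with rank function $r$ on ground set $E$ and positive integer $k$, a bipartition $(E_1,E_2)$ of $E$ is a vertical $k$-separation if $r(E_1),r(E_2)\ge k$ and $r(E_1)+r(E_2)\le r(E)+k-1$; the matroid is vertically $k$-connected if its rank is at least $k$ and it has no vertical $k'$-separation for any positive integer $k'<k$. *)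

theory Defs
  imports Main
begin

text \<open>Graphs: finite simple graphs without isolated vertices, vertices drawn from nat,
  represented by their edge set (each edge a 2-element vertex set); V(G) is the union of edges.\<close>

definition is_graph :: "nat set set \<Rightarrow> bool" where
  "is_graph G \<longleftrightarrow> finite G \<and> (\<forall>e\<in>G. card e = 2)"

definition verts :: "nat set set \<Rightarrow> nat set" where
  "verts G = \<Union>G"

definition degree :: "nat set set \<Rightarrow> nat \<Rightarrow> nat" where
  "degree G v = card {e\<in>G. v \<in> e}"

definition min_degree :: "nat set set \<Rightarrow> nat" where
  "min_degree G = Min (degree G ` verts G)"

definition complete_graph :: "nat \<Rightarrow> nat set set" where
  "complete_graph n = {{i, j} | i j. i < n \<and> j < n \<and> i \<noteq> j}"

definition matroid :: "'a set \<Rightarrow> ('a set \<Rightarrow> bool) \<Rightarrow> bool" where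
  "matroid E indep \<longleftrightarrow> finite E \<and> (\<forall>F. indep F \<longrightarrow> F \<subseteq> E) \<and> indep {} \<and>
     (\<forall>F F'. indep F \<and> F' \<subseteq> F \<longrightarrow> indep F') \<and>
     (\<forall>F F'. indep F \<and> indep F' \<and> card F < card F' \<longrightarrow> (\<exists>x\<in>F' - F. indep (insert x F)))"

definition mrank :: "('a set \<Rightarrow> bool) \<Rightarrow> 'a set \<Rightarrow> nat" where
  "mrank indep A = Max (card ` {F. F \<subseteq> A \<and> indep F})"

definition vertical_separation :: "'a set \<Rightarrow> ('a set \<Rightarrow> bool) \<Rightarrow> nat \<Rightarrow> 'a set \<Rightarrow> 'a set \<Rightarrow> bool" where
  "vertical_separation E indep k E1 E2 \<longleftrightarrow>
     E1 \<union> E2 = E \<and> E1 \<inter> E2 = {} \<and>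
     mrank indep E1 \<ge> k \<and> mrank indep E2 \<ge> k \<and>
     mrank indep E1 + mrank indep E2 \<le> mrank indep E + k - 1"

definition vertically_connected :: "'a set \<Rightarrow> ('a set \<Rightarrow> bool) \<Rightarrow> nat \<Rightarrow> bool" where
  "vertically_connected E indep k \<longleftrightarrow> mrank indep E \<ge> k \<and>
     (\<forall>k' E1 E2. 0 < k' \<and> k' < k \<longrightarrow> \<not> vertical_separation E indep k' E1 E2)"

text \<open>Graph matroid families: M G is the independence predicate of the matroid M(G) on E(G).\<close>

definition graph_matroid_family :: "(nat set set \<Rightarrow> nat set set \<Rightarrow> bool) \<Rightarrow> bool" where
  "graph_matroid_family M \<longleftrightarrow>
     (\<forall>G. is_graph G \<longrightarrow> matroid G (M G)) \<and>
     (\<forall>G H f. is_graph G \<and> is_graph H \<and> bij_betw f (verts G) (verts H) \<and>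
        H = (\<lambda>e. f ` e) ` G \<longrightarrow>
        (\<forall>F. F \<subseteq> G \<longrightarrow> (M G F \<longleftrightarrow> M H ((\<lambda>e. f ` e) ` F)))) \<and>
     (\<forall>G H. is_graph G \<and> H \<subseteq> G \<longrightarrow> (\<forall>F. M H F \<longleftrightarrow> M G F \<and> F \<subseteq> H))"

definition grank :: "(nat set set \<Rightarrow> nat set set \<Rightarrow> bool) \<Rightarrow> nat set set \<Rightarrow> nat" where
  "grank M G = mrank (M G) G"

definition nontrivial_family :: "(nat set set \<Rightarrow> nat set set \<Rightarrow> bool) \<Rightarrow> bool" where
  "nontrivial_family M \<longleftrightarrow> (\<exists>G. is_graph G \<and> grank M G < card G)"

definition unbounded_family :: "(nat set set \<Rightarrow> nat set set \<Rightarrow> bool) \<Rightarrow> bool" where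
  "unbounded_family M \<longleftrightarrow> (\<forall>m. \<exists>n. grank M (complete_graph n) \<ge> m)"

definition is_circuit :: "(nat set set \<Rightarrow> nat set set \<Rightarrow> bool) \<Rightarrow> nat set set \<Rightarrow> bool" where
  "is_circuit M C \<longleftrightarrow> is_graph C \<and> grank M C < card C \<and>
     (\<forall>e\<in>C. grank M (C - {e}) = card C - 1)"

definition dimensionality :: "(nat set set \<Rightarrow> nat set set \<Rightarrow> bool) \<Rightarrow> nat" where
  "dimensionality M = (LEAST d. \<exists>C. is_circuit M C \<and> d = min_degree C - 1)"

end

theory Submission
  imports Defs
begin

(* Two properties of circuits drive the argument. First, d >= 1: if some circuit C had a vertex
   v of degree one, with edge uv, then copies of C placed inside K_N show that every edge of K_N
   is spanned by the complete graph on a fixed set of |V(C)| vertices, so the rank of K_n would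
   stay bounded. Second, every vertex of a circuit has degree greater than d, so an edge set in
   which every potential circuit would have a vertex of degree at most d is independent.

   Let v be a vertex of minimum degree delta and split E(G) into the star of v and the rest.
   Adding min(delta, d) star edges to a basis of the rest keeps it independent, and the star has
   rank below r(G): either delta < k <= r(G), or d >= 2 and the star together with one more edge
   at a neighbour of v is independent. So both sides have rank below r(G), and vertical
   k-connectivity gives r(G) + k <= r(star) + r(rest) + 1 <= delta + r(G) - min(delta, d) + 1,
   i.e. delta >= k + d - 1. Finally |V| > delta. *)

definition spans :: "('a set \<Rightarrow> bool) \<Rightarrow> 'a set \<Rightarrow> 'a \<Rightarrow> bool" where
  "spans indep A x \<longleftrightarrow> mrank indep (insert x A) = mrank indep A"

locale finite_matroid =
  fixes E :: "'a set" and indep :: "'a set \<Rightarrow> bool"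
  assumes matroid: "matroid E indep"
begin

lemma finite_ground: "finite E"
  using matroid by (simp add: matroid_def)

lemma indep_subset_ground: "indep F \<Longrightarrow> F \<subseteq> E"
  using matroid by (simp add: matroid_def)

lemma indep_empty: "indep {}"
  using matroid by (simp add: matroid_def)

lemma indep_subset: "indep F \<Longrightarrow> F' \<subseteq> F \<Longrightarrow> indep F'"
  using matroid unfolding matroid_def by blast

lemma indep_augment:
  "indep F \<Longrightarrow> indep F' \<Longrightarrow> card F < card F' \<Longrightarrow> \<exists>x\<in>F' - F. indep (insert x F)"
  using matroid unfolding matroid_def by blast

lemma indep_finite: "indep F \<Longrightarrow> finite F"
  using finite_ground indep_subset_ground finite_subset by blast

lemma finite_indep_cards: "finite (card ` {F. F \<subseteq> A \<and> indep F})"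
proof -
  have "{F. F \<subseteq> A \<and> indep F} \<subseteq> Pow E"
    using indep_subset_ground by blast
  then show ?thesis
    using finite_ground by (meson finite_Pow_iff finite_imageI finite_subset)
qed

lemma card_le_rank: "F \<subseteq> A \<Longrightarrow> indep F \<Longrightarrow> card F \<le> mrank indep A"
  unfolding mrank_def using finite_indep_cards by (intro Max_ge) auto

lemma obtain_basis:
  obtains B where "B \<subseteq> A" "indep B" "card B = mrank indep A"
proof -
  have "mrank indep A \<in> card ` {F. F \<subseteq> A \<and> indep F}"
    unfolding mrank_def using finite_indep_cards indep_empty by (intro Max_in) auto
  then show ?thesis
    using that by auto
qed

lemma rank_le_card: "finite A \<Longrightarrow> mrank indep A \<le> card A"
  by (metis obtain_basis card_mono)

lemma rank_mono: "A \<subseteq> A' \<Longrightarrow> mrank indep A \<le> mrank indep A'"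
  by (metis obtain_basis card_le_rank order_trans)

lemma rank_indep: "indep A \<Longrightarrow> mrank indep A = card A"
  using card_le_rank rank_le_card indep_finite by (simp add: order_antisym)

lemma indep_iff_rank_eq_card: "finite A \<Longrightarrow> indep A \<longleftrightarrow> mrank indep A = card A"
  by (metis obtain_basis card_subset_eq rank_indep)

lemma extend_to_basis:
  "indep I \<Longrightarrow> I \<subseteq> A \<Longrightarrow> \<exists>B. I \<subseteq> B \<and> B \<subseteq> A \<and> indep B \<and> card B = mrank indep A"
proof (induction "mrank indep A - card I" arbitrary: I rule: less_induct)
  case less
  obtain B where B: "B \<subseteq> A" "indep B" "card B = mrank indep A"
    by (rule obtain_basis)
  show ?case
  proof (cases "card I < card B")
    case True
    then obtain x where x: "x \<in> B - I" "indep (insert x I)"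
      using indep_augment[OF less.prems(1) B(2) True] by blast
    have "card (insert x I) = card I + 1"
      using x(1) indep_finite[OF less.prems(1)] by simp
    then have "mrank indep A - card (insert x I) < mrank indep A - card I"
      using True B(3) by simp
    moreover have "insert x I \<subseteq> A"
      using x(1) B(1) less.prems(2) by blast
    ultimately obtain B' where "insert x I \<subseteq> B'" "B' \<subseteq> A" "indep B'" "card B' = mrank indep A"
      using less.hyps[OF _ x(2)] by meson
    then show ?thesis
      by blast
  next
    case False
    then have "card I = mrank indep A"
      using card_le_rank[OF less.prems(2,1)] B(3) by simp
    then show ?thesis
      using less.prems by blast
  qed
qed

lemma rank_submodular: "mrank indep (A \<union> B) + mrank indep (A \<inter> B) \<le> mrank indep A + mrank indep B"
proof -
  obtain I where I: "I \<subseteq> A \<inter> B" "indep I" "card I = mrank indep (A \<inter> B)"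
    by (rule obtain_basis)
  then obtain J where J: "I \<subseteq> J" "J \<subseteq> A \<union> B" "indep J" "card J = mrank indep (A \<union> B)"
    using extend_to_basis[of I "A \<union> B"] by blast
  have "finite J"
    using indep_finite[OF J(3)] .
  have "card (J \<inter> A) \<le> mrank indep A" "card (J \<inter> B) \<le> mrank indep B"
    using card_le_rank indep_subset[OF J(3)] by auto
  moreover have "(J \<inter> A) \<union> (J \<inter> B) = J" "(J \<inter> A) \<inter> (J \<inter> B) = J \<inter> A \<inter> B"
    using J(2) by blast+
  then have "card (J \<inter> A) + card (J \<inter> B) = card J + card (J \<inter> A \<inter> B)"
    using card_Un_Int[of "J \<inter> A" "J \<inter> B"] \<open>finite J\<close> by simp
  moreover have "card I \<le> card (J \<inter> A \<inter> B)"
    using I(1) J(1) \<open>finite J\<close> by (intro card_mono) auto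
  ultimately show ?thesis
    using I(3) J(4) by linarith
qed

lemma rank_subadditive: "mrank indep (A \<union> B) \<le> mrank indep A + mrank indep B"
  using rank_submodular[of A B] by linarith

lemma spans_if_dependent_insert:
  assumes "indep A" "\<not> indep (insert x A)"
  shows "spans indep A x"
proof -
  have "finite A" "x \<notin> A"
    using assms indep_finite insert_absorb by fastforce+
  then have "mrank indep (insert x A) \<le> card A + 1"
    using rank_le_card[of "insert x A"] by simp
  moreover have "mrank indep (insert x A) \<noteq> card A + 1"
    using assms(2) indep_iff_rank_eq_card[of "insert x A"] \<open>finite A\<close> \<open>x \<notin> A\<close> by simp
  moreover have "card A \<le> mrank indep (insert x A)"
    using rank_indep[OF assms(1)] rank_mono[of A "insert x A"] by auto
  ultimately show ?thesis
    unfolding spans_def using rank_indep[OF assms(1)] by linarith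
qed

lemma spans_mono: "A \<subseteq> A' \<Longrightarrow> spans indep A x \<Longrightarrow> spans indep A' x"
  unfolding spans_def
proof -
  assume "A \<subseteq> A'" and spanned: "mrank indep (insert x A) = mrank indep A"
  then have "A' \<union> insert x A = insert x A'"
    by blast
  then have "mrank indep (insert x A') + mrank indep (A' \<inter> insert x A)
      \<le> mrank indep A' + mrank indep (insert x A)"
    using rank_submodular[of A' "insert x A"] by simp
  moreover have "mrank indep A \<le> mrank indep (A' \<inter> insert x A)"
    using \<open>A \<subseteq> A'\<close> by (intro rank_mono) auto
  moreover have "mrank indep A' \<le> mrank indep (insert x A')"
    by (intro rank_mono) auto
  ultimately show "mrank indep (insert x A') = mrank indep A'"
    using spanned by linarith
qed

lemma rank_Un_spanned: "finite B \<Longrightarrow> \<forall>x\<in>B. spans indep A x \<Longrightarrow> mrank indep (A \<union> B) = mrank indep A"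
proof (induction B rule: finite_induct)
  case (insert x B)
  then have "spans indep (A \<union> B) x"
    using spans_mono[of A "A \<union> B" x] by blast
  then show ?case
    using insert by (simp add: spans_def)
qed simp

lemma spans_trans:
  "mrank indep (A \<union> B) = mrank indep A \<Longrightarrow> spans indep (A \<union> B) x \<Longrightarrow> spans indep A x"
  unfolding spans_def
  by (metis Un_insert_left le_antisym rank_mono sup_ge1 subset_insertI)

lemma vertically_connected_rank_sum:
  assumes "vertically_connected E indep k" "E1 \<union> E2 = E" "E1 \<inter> E2 = {}"
    and "mrank indep E1 < mrank indep E" "mrank indep E2 < mrank indep E"
  shows "mrank indep E + k \<le> mrank indep E1 + mrank indep E2 + 1"
proof -
  define k' where "k' = mrank indep E1 + mrank indep E2 + 1 - mrank indep E"
  have subadditive: "mrank indep E \<le> mrank indep E1 + mrank indep E2"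
    using rank_subadditive[of E1 E2] assms(2) by simp
  then have "vertical_separation E indep k' E1 E2" "0 < k'"
    using assms(2-5) unfolding vertical_separation_def k'_def by auto
  then have "k \<le> k'"
    using assms(1) unfolding vertically_connected_def by (meson not_less)
  with subadditive show ?thesis
    unfolding k'_def by linarith
qed

lemma nonempty_if_vertically_connected:
  "vertically_connected E indep k \<Longrightarrow> 0 < k \<Longrightarrow> E \<noteq> {}"
  using rank_le_card[of "{}"] unfolding vertically_connected_def by auto

end

lemma is_graph_subset: "is_graph G \<Longrightarrow> H \<subseteq> G \<Longrightarrow> is_graph H"
  unfolding is_graph_def using finite_subset by blast

lemma finite_verts: "is_graph G \<Longrightarrow> finite (verts G)"
  unfolding is_graph_def verts_def by (metis card.infinite finite_Union zero_neq_numeral)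

lemma obtain_edge_ends:
  assumes "is_graph G" "e \<in> G"
  obtains x y where "e = {x, y}" "x \<noteq> y"
  using assms unfolding is_graph_def by (meson card_2_iff)

lemma obtain_other_end:
  assumes "is_graph G" "e \<in> G" "v \<in> e"
  obtains w where "e = {v, w}" "w \<noteq> v"
proof -
  obtain x y where xy: "e = {x, y}" "x \<noteq> y"
    using obtain_edge_ends[OF assms(1,2)] .
  then consider "v = x" | "v = y"
    using assms(3) by blast
  then show ?thesis
    using that xy by cases (auto simp: insert_commute)
qed

lemma verts_nonempty: "is_graph G \<Longrightarrow> G \<noteq> {} \<Longrightarrow> verts G \<noteq> {}"
  unfolding verts_def by (metis Union_empty_conv ex_in_conv insert_not_empty obtain_edge_ends)

definition star :: "nat set set \<Rightarrow> nat \<Rightarrow> nat set set" where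
  "star G v = {e \<in> G. v \<in> e}"

lemma degree_eq_card_star: "degree G v = card (star G v)"
  unfolding degree_def star_def ..

lemma finite_star: "is_graph G \<Longrightarrow> finite (star G v)"
  unfolding is_graph_def star_def by simp

lemma degree_pos: "is_graph G \<Longrightarrow> v \<in> verts G \<Longrightarrow> 0 < degree G v"
  unfolding degree_eq_card_star using finite_star
  by (auto simp: card_gt_0_iff star_def verts_def)

lemma min_degree_le: "is_graph G \<Longrightarrow> v \<in> verts G \<Longrightarrow> min_degree G \<le> degree G v"
  unfolding min_degree_def using finite_verts by simp

lemma obtain_min_degree_vertex:
  assumes "is_graph G" "G \<noteq> {}"
  obtains v where "v \<in> verts G" "degree G v = min_degree G"
proof -
  have "min_degree G \<in> degree G ` verts G"
    unfolding min_degree_def using assms finite_verts verts_nonempty by simp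
  then show ?thesis
    using that by auto
qed

lemma degree_less_card_verts:
  assumes "is_graph G" "v \<in> verts G"
  shows "degree G v < card (verts G)"
proof -
  have "star G v \<subseteq> (\<lambda>w. {v, w}) ` (verts G - {v})"
  proof
    fix e assume "e \<in> star G v"
    then obtain w where "e = {v, w}" "w \<noteq> v" "e \<in> G"
      using obtain_other_end[OF assms(1)] unfolding star_def by blast
    then show "e \<in> (\<lambda>w. {v, w}) ` (verts G - {v})"
      unfolding verts_def by blast
  qed
  then have "degree G v \<le> card (verts G - {v})"
    unfolding degree_eq_card_star using finite_verts[OF assms(1)]
    by (meson card_image_le finite_Diff card_mono finite_imageI order_trans)
  also have "\<dots> < card (verts G)"
    using card_Diff1_less[OF finite_verts[OF assms(1)] assms(2)] .
  finally show ?thesis .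
qed

lemma obtain_pendant_edge:
  assumes "is_graph C" "degree C v = 1"
  obtains u where "u \<noteq> v" "{u, v} \<in> C" "v \<notin> verts (C - {{u, v}})"
proof -
  obtain e where e: "star C v = {e}"
    using assms(2) unfolding degree_eq_card_star by (meson card_1_singletonE)
  then have "e \<in> C" "v \<in> e"
    unfolding star_def by auto
  then obtain u where "e = {v, u}" "u \<noteq> v"
    using obtain_other_end[OF assms(1)] by blast
  then have "e = {u, v}" "u \<noteq> v"
    by auto
  moreover have "v \<notin> verts (C - {e})"
    using e unfolding star_def verts_def by blast
  ultimately show ?thesis
    using that \<open>e \<in> C\<close> by blast
qed

lemma verts_image: "verts ((\<lambda>e. \<phi> ` e) ` G) = \<phi> ` verts G"
  unfolding verts_def by auto

lemma is_graph_image: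
  assumes "is_graph G" "inj_on \<phi> (verts G)"
  shows "is_graph ((\<lambda>e. \<phi> ` e) ` G)"
proof -
  have "inj_on \<phi> e" if "e \<in> G" for e
    using assms(2) that unfolding verts_def by (meson Union_upper inj_on_subset)
  then show ?thesis
    using assms(1) unfolding is_graph_def by (auto simp: card_image)
qed

lemma is_graph_complete_graph: "is_graph (complete_graph N)"
proof -
  have "complete_graph N \<subseteq> Pow {..<N}"
    unfolding complete_graph_def by blast
  then show ?thesis
    unfolding is_graph_def complete_graph_def by (auto intro: finite_subset)
qed

lemma complete_graph_mono: "n \<le> N \<Longrightarrow> complete_graph n \<subseteq> complete_graph N"
  unfolding complete_graph_def by fastforce

lemma subset_complete_graph:
  assumes "is_graph G" "verts G \<subseteq> {..<N}"
  shows "G \<subseteq> complete_graph N"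
proof
  fix e assume "e \<in> G"
  then obtain x y where "e = {x, y}" "x \<noteq> y"
    using assms(1) obtain_edge_ends by blast
  then show "e \<in> complete_graph N"
    using assms(2) \<open>e \<in> G\<close> unfolding complete_graph_def verts_def by blast
qed

lemma circuit_is_graph: "is_circuit M C \<Longrightarrow> is_graph C"
  unfolding is_circuit_def by blast

lemma dimensionality_le: "is_circuit M C \<Longrightarrow> dimensionality M \<le> min_degree C - 1"
  unfolding dimensionality_def by (rule Least_le) blast

lemma obtain_circuit_of_dimensionality:
  assumes "is_circuit M C"
  obtains C' where "is_circuit M C'" "dimensionality M = min_degree C' - 1"
  using LeastI[of "\<lambda>d. \<exists>C. is_circuit M C \<and> d = min_degree C - 1" "min_degree C - 1"] assms
  unfolding dimensionality_def by blast

lemma dimensionality_less_degree: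
  assumes "is_circuit M C" "v \<in> verts C"
  shows "dimensionality M < degree C v"
  using dimensionality_le[OF assms(1)] min_degree_le[OF circuit_is_graph[OF assms(1)] assms(2)]
    degree_pos[OF circuit_is_graph[OF assms(1)] assms(2)] by linarith

locale graph_matroid =
  fixes M :: "nat set set \<Rightarrow> nat set set \<Rightarrow> bool"
  assumes family: "graph_matroid_family M"
begin

lemma finite_matroid: "is_graph G \<Longrightarrow> finite_matroid G (M G)"
  using family[unfolded graph_matroid_family_def, THEN conjunct1] by (simp add: finite_matroid.intro)

lemma indep_restrict: "is_graph G \<Longrightarrow> H \<subseteq> G \<Longrightarrow> M H F \<longleftrightarrow> M G F \<and> F \<subseteq> H"
  using family[unfolded graph_matroid_family_def, THEN conjunct2, THEN conjunct2] by blast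

lemma indep_image:
  "is_graph G \<Longrightarrow> is_graph H \<Longrightarrow> bij_betw f (verts G) (verts H) \<Longrightarrow> H = (\<lambda>e. f ` e) ` G \<Longrightarrow>
    F \<subseteq> G \<Longrightarrow> M G F \<longleftrightarrow> M H ((\<lambda>e. f ` e) ` F)"
  using family[unfolded graph_matroid_family_def, THEN conjunct2, THEN conjunct1] by blast

lemma rank_restrict:
  assumes "is_graph G" "H \<subseteq> G" "A \<subseteq> H"
  shows "mrank (M H) A = mrank (M G) A"
proof -
  have "{F. F \<subseteq> A \<and> M H F} = {F. F \<subseteq> A \<and> M G F}"
    using indep_restrict[OF assms(1,2)] assms(3) by blast
  then show ?thesis
    unfolding mrank_def by simp
qed

lemma grank_eq_rank: "is_graph G \<Longrightarrow> H \<subseteq> G \<Longrightarrow> grank M H = mrank (M G) H"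
  unfolding grank_def using rank_restrict by blast

lemma circuit_dependent:
  assumes "is_circuit M C" "is_graph G" "C \<subseteq> G"
  shows "\<not> M G C"
proof
  assume "M G C"
  then have "M C C"
    using indep_restrict[OF assms(2,3)] by blast
  then have "grank M C = card C"
    unfolding grank_def
    using finite_matroid.rank_indep[OF finite_matroid[OF circuit_is_graph[OF assms(1)]]] by blast
  then show False
    using assms(1) unfolding is_circuit_def by simp
qed

lemma circuit_minus_edge_indep:
  assumes "is_circuit M C" "e \<in> C"
  shows "M C (C - {e})"
proof -
  have C: "is_graph C" "finite C"
    using circuit_is_graph[OF assms(1)] is_graph_def by auto
  then have "grank M (C - {e}) = card (C - {e})"
    using assms unfolding is_circuit_def by simp
  moreover have "finite_matroid (C - {e}) (M (C - {e}))"
    using finite_matroid is_graph_subset[OF C(1) Diff_subset] .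
  ultimately have "M (C - {e}) (C - {e})"
    unfolding grank_def using finite_matroid.indep_iff_rank_eq_card C(2) by blast
  then show ?thesis
    using indep_restrict[OF C(1)] by blast
qed

lemma dependent_contains_circuit:
  assumes G: "is_graph G" and "F \<subseteq> G" "\<not> M G F"
  shows "\<exists>C\<subseteq>F. is_circuit M C"
proof -
  interpret finite_matroid G "M G"
    using finite_matroid[OF G] .
  obtain C where C: "C \<subseteq> F" "\<not> M G C"
    and minimal: "\<And>C'. C' \<subseteq> F \<and> \<not> M G C' \<Longrightarrow> card C \<le> card C'"
    using ex_has_least_nat[of "\<lambda>C. C \<subseteq> F \<and> \<not> M G C" F card] assms(2,3) by blast
  have "C \<subseteq> G"
    using C(1) assms(2) by blast
  then have "finite C"
    using finite_ground by (rule finite_subset)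
  have "grank M C < card C"
    using grank_eq_rank[OF G \<open>C \<subseteq> G\<close>] rank_le_card[OF \<open>finite C\<close>]
      indep_iff_rank_eq_card[OF \<open>finite C\<close>] C(2) by linarith
  moreover have "grank M (C - {e}) = card C - 1" if "e \<in> C" for e
  proof -
    have "card (C - {e}) < card C"
      using card_Diff1_less[OF \<open>finite C\<close> that] .
    then have "M G (C - {e})"
      using minimal[of "C - {e}"] C(1) by fastforce
    then have "mrank (M G) (C - {e}) = card (C - {e})"
      by (rule rank_indep)
    moreover have "grank M (C - {e}) = mrank (M G) (C - {e})"
      using grank_eq_rank[OF G] \<open>C \<subseteq> G\<close> by blast
    ultimately show ?thesis
      using that \<open>finite C\<close> by simp
  qed
  ultimately have "is_circuit M C"
    unfolding is_circuit_def using is_graph_subset[OF G \<open>C \<subseteq> G\<close>] by blast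
  then show ?thesis
    using C(1) by blast
qed

lemma exists_circuit:
  assumes "nontrivial_family M"
  obtains C where "is_circuit M C"
proof -
  obtain G where G: "is_graph G" "mrank (M G) G < card G"
    using assms unfolding nontrivial_family_def grank_def by blast
  then have "\<not> M G G"
    using finite_matroid.rank_indep[OF finite_matroid[OF G(1)], of G] by linarith
  then show ?thesis
    using dependent_contains_circuit[OF G(1) order_refl] that by blast
qed

lemma spans_image_of_circuit:
  assumes C: "is_circuit M C" "e \<in> C" and inj: "inj_on \<phi> (verts C)"
    and H: "is_graph H" "(\<lambda>e. \<phi> ` e) ` C \<subseteq> H"
  shows "spans (M H) ((\<lambda>e. \<phi> ` e) ` (C - {e})) (\<phi> ` e)"
proof -
  let ?C' = "(\<lambda>e. \<phi> ` e) ` C"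
  have "is_graph C"
    using circuit_is_graph[OF C(1)] .
  have copy: "M C F \<longleftrightarrow> M ?C' ((\<lambda>e. \<phi> ` e) ` F)" if "F \<subseteq> C" for F
  proof (rule indep_image[OF \<open>is_graph C\<close> _ _ refl that])
    show "is_graph ?C'"
      using is_graph_image[OF \<open>is_graph C\<close> inj] .
    show "bij_betw \<phi> (verts C) (verts ?C')"
      using inj by (simp add: verts_image inj_on_imp_bij_betw)
  qed
  have "M ?C' ((\<lambda>e. \<phi> ` e) ` (C - {e}))"
    using copy[OF Diff_subset] circuit_minus_edge_indep[OF C] by simp
  then have "M H ((\<lambda>e. \<phi> ` e) ` (C - {e}))"
    using indep_restrict[OF H] by blast
  moreover have "\<not> M ?C' ?C'"
    using copy[OF order_refl] circuit_dependent[OF C(1) \<open>is_graph C\<close> order_refl] by simp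
  moreover have "?C' = insert (\<phi> ` e) ((\<lambda>e. \<phi> ` e) ` (C - {e}))"
    using C(2) by blast
  ultimately have "\<not> M H (insert (\<phi> ` e) ((\<lambda>e. \<phi> ` e) ` (C - {e})))"
    using indep_restrict[OF H] by simp
  with \<open>M H ((\<lambda>e. \<phi> ` e) ` (C - {e}))\<close> show ?thesis
    by (rule finite_matroid.spans_if_dependent_insert[OF finite_matroid[OF H(1)]])
qed

context
  fixes C :: "nat set set" and u v :: nat
  assumes circuit: "is_circuit M C"
    and pendant: "{u, v} \<in> C" "u \<noteq> v" "v \<notin> verts (C - {{u, v}})"
begin

(* Copy C into K_N with u, v sent to a, b and the remaining vertices into Y; since v is pendant,
   every edge of the copy other than ab lies inside insert a Y. *)
lemma pendant_edge_spanned: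
  assumes ab: "a < N" "b < N" "a \<noteq> b"
    and Y: "Y \<subseteq> {..<N}" "a \<notin> Y" "b \<notin> Y" "card (verts C) \<le> card Y + 2"
  shows "spans (M (complete_graph N)) {p \<in> complete_graph N. p \<subseteq> insert a Y} {a, b}"
proof -
  have "is_graph C"
    using circuit_is_graph[OF circuit] .
  have "u \<in> verts C" "v \<in> verts C"
    using pendant(1) unfolding verts_def by blast+
  then have "card (verts C - {u, v}) \<le> card Y"
    using Y(4) pendant(2) by (simp add: card_Diff_subset)
  moreover have "finite Y"
    using Y(1) finite_subset by blast
  ultimately obtain g where g: "inj_on g (verts C - {u, v})" "g ` (verts C - {u, v}) \<subseteq> Y"
    using card_le_inj[of "verts C - {u, v}" Y] finite_verts[OF \<open>is_graph C\<close>] by blast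
  define \<phi> where "\<phi> x = (if x = u then a else if x = v then b else g x)" for x
  have \<phi>_rest: "\<phi> ` (verts C - {v}) \<subseteq> insert a Y"
    using g(2) unfolding \<phi>_def by auto
  have "inj_on \<phi> (verts C)"
  proof (rule inj_onI)
    fix x y assume "x \<in> verts C" "y \<in> verts C" "\<phi> x = \<phi> y"
    then show "x = y"
      using g ab(3) Y(2,3) pendant(2) unfolding \<phi>_def by (auto split: if_splits dest: inj_onD)
  qed
  moreover have "\<phi> ` verts C \<subseteq> {..<N}"
    using \<phi>_rest Y(1) ab(1,2) unfolding \<phi>_def by auto
  ultimately have "(\<lambda>e. \<phi> ` e) ` C \<subseteq> complete_graph N"
    using subset_complete_graph is_graph_image[OF \<open>is_graph C\<close>] by (simp add: verts_image)
  moreover have "\<phi> ` {u, v} = {a, b}"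
    unfolding \<phi>_def using pendant(2) by (simp add: insert_commute)
  ultimately have spanned: "spans (M (complete_graph N)) ((\<lambda>e. \<phi> ` e) ` (C - {{u, v}})) {a, b}"
    using spans_image_of_circuit[OF circuit pendant(1) \<open>inj_on \<phi> (verts C)\<close> is_graph_complete_graph] by simp
  have "(\<lambda>e. \<phi> ` e) ` (C - {{u, v}}) \<subseteq> {p \<in> complete_graph N. p \<subseteq> insert a Y}"
  proof (rule image_subsetI)
    fix e assume e: "e \<in> C - {{u, v}}"
    then have "\<phi> ` e \<in> complete_graph N"
      using \<open>(\<lambda>e. \<phi> ` e) ` C \<subseteq> complete_graph N\<close> by blast
    moreover have "e \<subseteq> verts C - {v}"
      using e pendant(3) unfolding verts_def by blast
    then have "\<phi> ` e \<subseteq> insert a Y"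
      using \<phi>_rest by (meson image_mono order_trans)
    ultimately show "\<phi> ` e \<in> {p \<in> complete_graph N. p \<subseteq> insert a Y}"
      by simp
  qed
  from finite_matroid.spans_mono[OF finite_matroid[OF is_graph_complete_graph] this spanned]
  show ?thesis .
qed

lemma edge_into_block_spanned:
  assumes N: "card (verts C) \<le> N" and z: "z < card (verts C)" and a: "card (verts C) \<le> a" "a < N"
  shows "spans (M (complete_graph N)) {p \<in> complete_graph N. p \<subseteq> {..<card (verts C)}} {z, a}"
proof -
  let ?Z = "{..<card (verts C)}"
  have "spans (M (complete_graph N)) {p \<in> complete_graph N. p \<subseteq> insert z (?Z - {z})} {z, a}"
    using z a N by (intro pendant_edge_spanned) auto
  then show ?thesis
    using z by (simp add: insert_absorb)
qed

(* A copy with u, v sent to a, b and the rest into the block uses only block edges and edges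
   from a into the block, and the latter are spanned by the block already. *)
lemma edge_outside_block_spanned:
  assumes N: "card (verts C) \<le> N" and a: "card (verts C) \<le> a" "a < N" and b: "b < N" "a \<noteq> b"
  shows "spans (M (complete_graph N)) {p \<in> complete_graph N. p \<subseteq> {..<card (verts C)}} {a, b}"
proof -
  let ?H = "complete_graph N" and ?Z = "{..<card (verts C)}"
  let ?K = "{p \<in> ?H. p \<subseteq> ?Z}" and ?S = "(\<lambda>z. {z, a}) ` ?Z"
  interpret H: finite_matroid ?H "M ?H"
    using finite_matroid[OF is_graph_complete_graph] .
  have S_spanned: "mrank (M ?H) (?K \<union> ?S) = mrank (M ?H) ?K"
    using H.rank_Un_spanned edge_into_block_spanned[OF N _ a] by auto
  have "card (verts C) \<le> card (?Z - {b}) + 2"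
    using diff_card_le_card_Diff[of "{b}" ?Z] by simp
  then have spanned: "spans (M ?H) {p \<in> ?H. p \<subseteq> insert a (?Z - {b})} {a, b}"
    using a b N by (intro pendant_edge_spanned) auto
  have "{p \<in> ?H. p \<subseteq> insert a (?Z - {b})} \<subseteq> ?K \<union> ?S"
  proof
    fix p assume p: "p \<in> {p \<in> ?H. p \<subseteq> insert a (?Z - {b})}"
    then obtain i j where ij: "p = {i, j}" "i \<noteq> j"
      unfolding complete_graph_def by blast
    show "p \<in> ?K \<union> ?S"
    proof (cases "a \<in> p")
      case True
      then have "p = {i, a} \<and> i \<in> ?Z \<or> p = {j, a} \<and> j \<in> ?Z"
        using p ij by auto
      then show ?thesis
        by blast
    next
      case False
      then show ?thesis
        using p by blast
    qed
  qed
  then have "spans (M ?H) (?K \<union> ?S) {a, b}"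
    using spanned by (rule H.spans_mono)
  then show ?thesis
    by (rule H.spans_trans[OF S_spanned])
qed

lemma rank_complete_graph_eq_rank_block:
  assumes N: "card (verts C) \<le> N"
  shows "mrank (M (complete_graph N)) (complete_graph N)
    = mrank (M (complete_graph N)) {p \<in> complete_graph N. p \<subseteq> {..<card (verts C)}}"
proof -
  let ?H = "complete_graph N" and ?Z = "{..<card (verts C)}"
  let ?K = "{p \<in> ?H. p \<subseteq> ?Z}"
  have spanned: "spans (M ?H) ?K x" if x: "x \<in> ?H" for x
  proof -
    obtain i j where ij: "x = {i, j}" "i < N" "j < N" "i \<noteq> j"
      using x unfolding complete_graph_def by blast
    consider "i \<in> ?Z" "j \<in> ?Z" | "i \<notin> ?Z" | "j \<notin> ?Z"
      by blast
    then show ?thesis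
    proof cases
      case 1
      then have "x \<in> ?K"
        using x ij(1) by auto
      then show ?thesis
        unfolding spans_def by (simp add: insert_absorb)
    next
      case 2
      then show ?thesis
        using edge_outside_block_spanned[OF N, of i j] ij by simp
    next
      case 3
      then show ?thesis
        using edge_outside_block_spanned[OF N, of j i] ij by (simp add: insert_commute)
    qed
  qed
  have "finite ?H"
    using is_graph_complete_graph unfolding is_graph_def by blast
  then have "mrank (M ?H) (?K \<union> ?H) = mrank (M ?H) ?K"
    using finite_matroid.rank_Un_spanned[OF finite_matroid[OF is_graph_complete_graph]] spanned
    by blast
  moreover have "?K \<union> ?H = ?H"
    by blast
  ultimately show ?thesis
    by simp
qed

lemma grank_complete_graph_bounded: "grank M (complete_graph n) \<le> 2 ^ card (verts C)"
proof -
  define N where "N = max n (card (verts C))"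
  let ?H = "complete_graph N" and ?Z = "{..<card (verts C)}"
  interpret H: finite_matroid ?H "M ?H"
    using finite_matroid[OF is_graph_complete_graph] .
  have "grank M (complete_graph n) \<le> mrank (M ?H) ?H"
    using grank_eq_rank[OF is_graph_complete_graph complete_graph_mono[of n N]]
      H.rank_mono[OF complete_graph_mono[of n N]] unfolding N_def by simp
  also have "\<dots> = mrank (M ?H) {p \<in> ?H. p \<subseteq> ?Z}"
    using rank_complete_graph_eq_rank_block unfolding N_def by simp
  also have "\<dots> \<le> card {p \<in> ?H. p \<subseteq> ?Z}"
    using H.rank_le_card H.finite_ground by (simp add: finite_subset)
  also have "\<dots> \<le> card (Pow ?Z)"
    by (intro card_mono) auto
  also have "\<dots> = 2 ^ card (verts C)"
    by (simp add: card_Pow)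
  finally show ?thesis .
qed

end

lemma dimensionality_pos:
  assumes "nontrivial_family M" "unbounded_family M"
  shows "1 \<le> dimensionality M"
proof (rule ccontr)
  assume "\<not> 1 \<le> dimensionality M"
  obtain C where C: "is_circuit M C" "min_degree C \<le> 1"
    using exists_circuit[OF assms(1)] obtain_circuit_of_dimensionality \<open>\<not> 1 \<le> _\<close>
    by (metis diff_is_0_eq less_one not_le)
  then have "C \<noteq> {}"
    unfolding is_circuit_def by auto
  then obtain v where v: "v \<in> verts C" "degree C v = min_degree C"
    using obtain_min_degree_vertex circuit_is_graph[OF C(1)] by blast
  then have "degree C v = 1"
    using C(2) degree_pos[OF circuit_is_graph[OF C(1)] v(1)] by linarith
  then obtain u where "u \<noteq> v" "{u, v} \<in> C" "v \<notin> verts (C - {{u, v}})"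
    using obtain_pendant_edge circuit_is_graph[OF C(1)] by blast
  then have "grank M (complete_graph n) \<le> 2 ^ card (verts C)" for n
    using grank_complete_graph_bounded C(1) by blast
  then show False
    using assms(2) unfolding unbounded_family_def by (meson Suc_n_not_le_n order_trans)
qed

lemma indep_Un_small_star:
  assumes G: "is_graph G" and I: "M G I" "I \<inter> star G v = {}"
    and S: "S \<subseteq> star G v" "card S \<le> dimensionality M"
  shows "M G (I \<union> S)"
proof (rule ccontr)
  interpret finite_matroid G "M G"
    using finite_matroid[OF G] .
  assume "\<not> M G (I \<union> S)"
  moreover have "I \<union> S \<subseteq> G"
    using indep_subset_ground[OF I(1)] S(1) unfolding star_def by blast
  ultimately obtain C where C: "C \<subseteq> I \<union> S" "is_circuit M C"
    using dependent_contains_circuit[OF G] by blast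
  show False
  proof (cases "C \<subseteq> I")
    case True
    then show False
      using indep_subset[OF I(1)] circuit_dependent[OF C(2) G] \<open>I \<union> S \<subseteq> G\<close> C(1) by blast
  next
    case False
    then obtain f where "f \<in> C" "f \<in> S"
      using C(1) by blast
    then have "v \<in> verts C"
      using S(1) unfolding star_def verts_def by blast
    moreover have "star C v \<subseteq> S"
      using C(1) I(2) indep_subset_ground[OF I(1)] unfolding star_def by blast
    then have "degree C v \<le> card S"
      unfolding degree_eq_card_star
      by (rule card_mono[OF finite_subset[OF S(1) finite_star[OF G]]])
    ultimately show False
      using dimensionality_less_degree[OF C(2)] S(2) by fastforce
  qed
qed

lemma rank_complement_star:
  assumes G: "is_graph G"
  shows "mrank (M G) (G - star G v) + min (degree G v) (dimensionality M) \<le> mrank (M G) G"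
proof -
  interpret finite_matroid G "M G"
    using finite_matroid[OF G] .
  obtain I where I: "I \<subseteq> G - star G v" "M G I" "card I = mrank (M G) (G - star G v)"
    by (rule obtain_basis)
  obtain S where S: "S \<subseteq> star G v" "card S = min (degree G v) (dimensionality M)"
    using obtain_subset_with_card_n[of "min (degree G v) (dimensionality M)" "star G v"]
    unfolding degree_eq_card_star by auto
  have "finite I" "finite S"
    using indep_finite[OF I(2)] finite_subset[OF S(1) finite_star[OF G]] .
  have "I \<inter> star G v = {}"
    using I(1) by blast
  then have "M G (I \<union> S)"
    using indep_Un_small_star[OF G I(2) _ S(1)] S(2) by simp
  moreover have "I \<union> S \<subseteq> G"
    using I(1) S(1) unfolding star_def by blast
  ultimately have "card (I \<union> S) \<le> mrank (M G) G"
    using card_le_rank by blast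
  moreover have "card (I \<union> S) = card I + card S"
    using \<open>finite I\<close> \<open>finite S\<close> \<open>I \<inter> star G v = {}\<close> S(1) by (intro card_Un_disjoint) auto
  ultimately show ?thesis
    using I(3) S(2) by linarith
qed

lemma indep_insert_star:
  assumes G: "is_graph G" and d: "2 \<le> dimensionality M" and f: "f \<in> G" "v \<notin> f"
  shows "M G (insert f (star G v))"
proof (rule ccontr)
  assume dependent: "\<not> M G (insert f (star G v))"
  have "insert f (star G v) \<subseteq> G"
    using f(1) unfolding star_def by auto
  then obtain C where C: "C \<subseteq> insert f (star G v)" "is_circuit M C"
    using dependent_contains_circuit[OF G _ dependent] by blast
  then have "C \<noteq> {}"
    unfolding is_circuit_def by auto
  then obtain g where "g \<in> C"
    by blast
  then obtain y where y: "y \<in> g" "y \<noteq> v"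
    using obtain_edge_ends[OF circuit_is_graph[OF C(2)]] by (metis insertCI)
  then have "y \<in> verts C"
    using \<open>g \<in> C\<close> unfolding verts_def by blast
  have "star C y \<subseteq> {{v, y}, f}"
  proof
    fix e assume e: "e \<in> star C y"
    show "e \<in> {{v, y}, f}"
    proof (cases "e = f")
      case False
      then have "e \<in> G" "v \<in> e" "y \<in> e"
        using e C(1) unfolding star_def by auto
      then obtain w where "e = {v, w}"
        using obtain_other_end[OF G] by blast
      then have "e = {v, y}"
        using \<open>y \<in> e\<close> y(2) by auto
      then show ?thesis
        by simp
    qed simp
  qed
  then have "degree C y \<le> card {{v, y}, f}"
    unfolding degree_eq_card_star by (intro card_mono) auto
  also have "\<dots> \<le> 2"
    by (simp add: card_insert_if)
  finally show False
    using dimensionality_less_degree[OF C(2) \<open>y \<in> verts C\<close>] d by linarith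
qed

lemma rank_star_less_rank:
  assumes G: "is_graph G" and d: "2 \<le> dimensionality M"
    and deg: "2 \<le> min_degree G" and v: "v \<in> verts G"
  shows "mrank (M G) (star G v) < mrank (M G) G"
proof -
  interpret finite_matroid G "M G"
    using finite_matroid[OF G] .
  obtain e where e: "e \<in> star G v"
    using degree_pos[OF G v] unfolding degree_eq_card_star card_gt_0_iff by blast
  then obtain w where w: "e = {v, w}" "w \<noteq> v"
    using obtain_other_end[OF G] unfolding star_def by blast
  then have "w \<in> verts G"
    using e unfolding star_def verts_def by blast
  then have "2 \<le> card (star G w)"
    using min_degree_le[OF G] deg unfolding degree_eq_card_star by (meson le_trans)
  then have "\<not> star G w \<subseteq> {e}"
    using card_mono[of "{e}" "star G w"] by auto
  then obtain f where f: "f \<in> star G w" "f \<noteq> e"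
    by blast
  have "v \<notin> f"
  proof
    assume "v \<in> f"
    then obtain w' where "f = {v, w'}"
      using f(1) obtain_other_end[OF G] unfolding star_def by blast
    then have "f = {v, w}"
      using f(1) w(2) unfolding star_def by auto
    then show False
      using f(2) w(1) by simp
  qed
  then have "f \<notin> star G v"
    unfolding star_def by blast
  have "f \<in> G"
    using f(1) unfolding star_def by blast
  have "mrank (M G) (star G v) \<le> card (star G v)"
    using rank_le_card[OF finite_star[OF G]] .
  also have "\<dots> < card (insert f (star G v))"
    using \<open>f \<notin> star G v\<close> finite_star[OF G] by simp
  also have "\<dots> \<le> mrank (M G) G"
    using card_le_rank[OF _ indep_insert_star[OF G d \<open>f \<in> G\<close> \<open>v \<notin> f\<close>]] \<open>f \<in> G\<close>
    unfolding star_def by blast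
  finally show ?thesis .
qed

lemma min_degree_ge_if_vertically_connected:
  assumes G: "is_graph G" and d: "1 \<le> dimensionality M"
    and k: "2 \<le> k" and vc: "vertically_connected G (M G) k"
  shows "k + dimensionality M - 1 \<le> min_degree G"
proof -
  interpret finite_matroid G "M G"
    using finite_matroid[OF G] .
  obtain v where v: "v \<in> verts G" "degree G v = min_degree G"
    using obtain_min_degree_vertex[OF G nonempty_if_vertically_connected[OF vc]] k by auto
  define \<delta> where "\<delta> = degree G v"
  define m where "m = min \<delta> (dimensionality M)"
  show ?thesis
  proof (cases "k \<le> \<delta> \<and> dimensionality M \<le> 1")
    case True
    then show ?thesis
      using v(2) unfolding \<delta>_def by linarith
  next
    case False
    have "k \<le> mrank (M G) G"
      using vc unfolding vertically_connected_def by blast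
    have star_rank: "mrank (M G) (star G v) \<le> \<delta>"
      unfolding \<delta>_def degree_eq_card_star using rank_le_card[OF finite_star[OF G]] .
    have "mrank (M G) (star G v) < mrank (M G) G"
    proof (cases "\<delta> < k")
      case True
      then show ?thesis
        using star_rank \<open>k \<le> mrank (M G) G\<close> by linarith
    next
      case False
      then show ?thesis
        using rank_star_less_rank[OF G _ _ v(1)] \<open>\<not> (k \<le> \<delta> \<and> _)\<close> v(2) k
        unfolding \<delta>_def by linarith
    qed
    moreover have complement_rank: "mrank (M G) (G - star G v) + m \<le> mrank (M G) G"
      using rank_complement_star[OF G] unfolding m_def \<delta>_def .
    moreover have "1 \<le> m"
      using degree_pos[OF G v(1)] d unfolding m_def \<delta>_def by simp
    moreover have "star G v \<union> (G - star G v) = G" "star G v \<inter> (G - star G v) = {}"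
      unfolding star_def by auto
    ultimately have "mrank (M G) G + k \<le> mrank (M G) (star G v) + mrank (M G) (G - star G v) + 1"
      using vertically_connected_rank_sum[OF vc] by simp
    then have "k + m \<le> \<delta> + 1"
      using star_rank complement_rank by linarith
    then show ?thesis
      using k unfolding m_def \<delta>_def v(2) by linarith
  qed
qed

end

theorem lemma3p4:
  fixes M :: "nat set set \<Rightarrow> nat set set \<Rightarrow> bool" and G :: "nat set set" and k :: nat
  assumes "graph_matroid_family M"
    and "nontrivial_family M"
    and "unbounded_family M"
    and "is_graph G"
    and "k \<ge> 2"
    and "vertically_connected G (M G) k"
  shows "min_degree G \<ge> k + dimensionality M - 1 \<and> card (verts G) \<ge> k + dimensionality M"
proof -
  interpret graph_matroid M
    using assms(1) by (rule graph_matroid.intro)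
  have d: "1 \<le> dimensionality M"
    using dimensionality_pos[OF assms(2,3)] .
  have "G \<noteq> {}"
    using finite_matroid.nonempty_if_vertically_connected[OF finite_matroid[OF assms(4)] assms(6)]
      assms(5) by simp
  then obtain v where "v \<in> verts G" "degree G v = min_degree G"
    using obtain_min_degree_vertex[OF assms(4)] by blast
  then have "min_degree G < card (verts G)"
    using degree_less_card_verts[OF assms(4)] by force
  moreover have "k + dimensionality M - 1 \<le> min_degree G"
    using min_degree_ge_if_vertically_connected[OF assms(4) d assms(5,6)] .
  ultimately show ?thesis
    using d by linarith
qed

end
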